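(* ${\rm ML}^{\rm W}(K_3)=3$, and ${\rm ML}^{\rm W}(K_n)=\frac{n^2-5n+10}{2}$ for every $n \geq 4$.
   Context: $K_n$ is the complete graph on $n$ vertices. A walk of a graph $G$ is a sequence of vertices $u_0u_1\dots u_p$ with $u_tu_{t+1}\in E(G)$ for all $t$ (vertices and edges may repeat); its length is $p$. For a walk $W$ of $G$, $G+W$ is the multigraph on $V(G)$ whose edge multiset consists of $E(G)$ together with each edge added as many times as $W$ traverses it. A multigraph is locally irregular if no two adjacent vertices have the same degree; a walk is irregularising if $G+W$ is locally irregular. ${\rm ML}^{\rm W}(G)$ denotes the minimum length of an irregularising walk of $G$ (a walk of length $0$ is allowed). *)

theory Defs
  imports Main
begin

text \<open>A simple graph is given by a vertex set V and a symmetric irreflexive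
 adjacency relation E.\<close>

definition is_walk :: "'a set \<Rightarrow> ('a \<Rightarrow> 'a \<Rightarrow> bool) \<Rightarrow> 'a list \<Rightarrow> bool" where
  "is_walk V E ws \<longleftrightarrow> ws \<noteq> [] \<and> set ws \<subseteq> V \<and>
     (\<forall>t. Suc t < length ws \<longrightarrow> E (ws ! t) (ws ! Suc t))"

definition walk_length :: "'a list \<Rightarrow> nat" where
  "walk_length ws = length ws - 1"

definition graph_deg :: "'a set \<Rightarrow> ('a \<Rightarrow> 'a \<Rightarrow> bool) \<Rightarrow> 'a \<Rightarrow> nat" where
  "graph_deg V E v = card {u \<in> V. E v u}"

text \<open>Degree of v in the multigraph G + W: degree in G plus the number of
 traversals by W of edges incident to v (the graph has no loops).\<close>
definition plus_walk_deg :: "'a set \<Rightarrow> ('a \<Rightarrow> 'a \<Rightarrow> bool) \<Rightarrow> 'a list \<Rightarrow> 'a \<Rightarrow> nat" where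
  "plus_walk_deg V E ws v = graph_deg V E v +
     card {t. t < walk_length ws \<and> (ws ! t = v \<or> ws ! Suc t = v)}"

text \<open>G + W is locally irregular: adjacent vertices (adjacency in G + W is
 adjacency in G, since W only uses edges of G) have distinct degrees.\<close>
definition irregularising :: "'a set \<Rightarrow> ('a \<Rightarrow> 'a \<Rightarrow> bool) \<Rightarrow> 'a list \<Rightarrow> bool" where
  "irregularising V E ws \<longleftrightarrow>
     (\<forall>u\<in>V. \<forall>v\<in>V. E u v \<longrightarrow> plus_walk_deg V E ws u \<noteq> plus_walk_deg V E ws v)"

definition min_irreg_walk_len :: "'a set \<Rightarrow> ('a \<Rightarrow> 'a \<Rightarrow> bool) \<Rightarrow> nat" where
  "min_irreg_walk_len V E = (LEAST p. \<exists>ws. is_walk V E ws \<and> irregularising V E ws \<and> walk_length ws = p)"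

definition K_V :: "nat \<Rightarrow> nat set" where "K_V n = {0..<n}"
definition K_E :: "nat \<Rightarrow> nat \<Rightarrow> bool" where "K_E u v \<longleftrightarrow> u \<noteq> v"

end

theory Submission
  imports Defs
begin

text \<open>In \<open>K\<^sub>n\<close> every vertex has degree \<open>n - 1\<close>, so a walk \<open>W\<close> is irregularising
  iff the numbers \<open>d\<^sub>W(v)\<close> of traversals of edges at \<open>v\<close> are pairwise distinct. They sum to
  \<open>2|W|\<close>, and \<open>d\<^sub>W(v)\<close> is twice the number of visits of \<open>v\<close> minus one for each end of \<open>W\<close>
  at \<open>v\<close>, so at most two of them are odd. Distinct naturals, \<open>e\<close> even and \<open>k \<le> 2\<close> odd, sum to
  at least \<open>e(e - 1) + k\<^sup>2\<close>, which for \<open>e + k = n \<ge> 4\<close> is at least \<open>n\<^sup>2 - 5n + 10\<close>; an explicit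
  walk realises the degrees \<open>0, 1, 3, 2, 4, \<dots>, 2(n - 3)\<close>. For \<open>K\<^sub>3\<close> the walks of length
  at most 2 are excluded by inspection.\<close>

fun walk_deg :: "'a list \<Rightarrow> 'a \<Rightarrow> nat" where
  "walk_deg (x # y # ys) v = of_bool (x = v \<or> y = v) + walk_deg (y # ys) v"
| "walk_deg _ v = 0"

lemma card_walk_incidences:
  "card {t. t < walk_length ws \<and> (ws ! t = v \<or> ws ! Suc t = v)} = walk_deg ws v"
proof (induction ws v rule: walk_deg.induct)
  case (1 x y ys v)
  let ?P = "\<lambda>ws t. t < walk_length ws \<and> (ws ! t = v \<or> ws ! Suc t = v)"
  have "{t. ?P (x # y # ys) t} = (if x = v \<or> y = v then {0} else {}) \<union> Suc ` {t. ?P (y # ys) t}"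
  proof (rule set_eqI)
    fix t
    show "t \<in> {t. ?P (x # y # ys) t} \<longleftrightarrow>
        t \<in> (if x = v \<or> y = v then {0} else {}) \<union> Suc ` {t. ?P (y # ys) t}"
      by (cases t) (auto simp: walk_length_def)
  qed
  then have "card {t. ?P (x # y # ys) t} = of_bool (x = v \<or> y = v) + card {t. ?P (y # ys) t}"
    by (simp add: card_Un_disjoint card_image)
  with "1.IH" show ?case by simp
qed (auto simp: walk_length_def)

lemma plus_walk_deg_eq: "plus_walk_deg V E ws v = graph_deg V E v + walk_deg ws v"
  by (simp add: plus_walk_deg_def card_walk_incidences)

lemma walk_deg_add_ends:
  assumes "successively (\<noteq>) ws" "ws \<noteq> []"
  shows "walk_deg ws v + of_bool (hd ws = v) + of_bool (last ws = v) = 2 * count_list ws v"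
  using assms
proof (induction ws v rule: walk_deg.induct)
  case (1 x y ys v)
  then have "x \<noteq> y" "successively (\<noteq>) (y # ys)" by auto
  with "1.IH" show ?case by (cases "x = v"; cases "y = v") auto
qed auto

lemma even_walk_deg:
  assumes "successively (\<noteq>) ws" "v \<noteq> hd ws" "v \<noteq> last ws"
  shows "even (walk_deg ws v)"
proof (cases "ws = []")
  case False
  with walk_deg_add_ends[OF assms(1) False, of v] assms(2,3) show ?thesis by simp
qed simp

lemma sum_walk_deg:
  assumes "finite V" "successively (\<noteq>) ws" "set ws \<subseteq> V"
  shows "(\<Sum>v\<in>V. walk_deg ws v) = 2 * walk_length ws"
  using assms(2,3)
proof (induction ws rule: induct_list012)
  case (3 x y ys)
  then have "x \<noteq> y" "successively (\<noteq>) (y # ys)" "{v \<in> V. x = v \<or> y = v} = {x, y}" by auto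
  moreover have "(\<Sum>v\<in>V. of_bool (x = v \<or> y = v) :: nat) = card {v \<in> V. x = v \<or> y = v}"
    using assms(1) by (simp add: of_bool_def sum.If_cases Int_def conj_commute)
  ultimately show ?case using "3.IH"(2) 3 by (simp add: sum.distrib walk_length_def)
qed (simp_all add: walk_length_def)

lemma card_mult_pred_le_sum:
  fixes S :: "nat set"
  assumes "finite S"
  shows "card S * (card S - 1) \<le> 2 * \<Sum>S"
  using assms
proof (induction "card S" arbitrary: S)
  case (Suc m)
  define M where "M = Max S"
  have "S \<noteq> {}" using Suc by auto
  then have "M \<in> S" "S \<subseteq> {0..M}"
    using Suc by (auto simp: M_def)
  then have "m \<le> M" "card (S - {M}) = m" "\<Sum>S = M + \<Sum>(S - {M})"
    using Suc card_mono[of "{0..M}" S] by (auto simp: sum.remove)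
  moreover have "m * (m - 1) \<le> 2 * \<Sum>(S - {M})"
    using Suc(1)[of "S - {M}"] Suc(3) \<open>card (S - {M}) = m\<close> by simp
  moreover have "Suc m * m = 2 * m + m * (m - 1)" by (cases m) auto
  ultimately show ?case using Suc(2)[symmetric] by simp
qed simp

lemma card_mult_pred_le_sum_same_parity:
  fixes S :: "nat set"
  assumes "finite S" "\<forall>x\<in>S. x mod 2 = r"
  shows "card S * (card S - 1) + r * card S \<le> \<Sum>S"
proof -
  have halves: "x = 2 * (x div 2) + r" if "x \<in> S" for x
    using that assms(2) div_mult_mod_eq[of x 2] by auto
  then have inj: "inj_on (\<lambda>x. x div 2) S"
    by (intro inj_onI) metis
  have "\<Sum>S = (\<Sum>x\<in>S. 2 * (x div 2) + r)"
    using halves by (intro sum.cong) auto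
  also have "\<dots> = 2 * \<Sum>((\<lambda>x. x div 2) ` S) + r * card S"
    using inj by (simp add: sum.distrib sum_distrib_left sum.reindex)
  finally show ?thesis
    using card_mult_pred_le_sum[of "(\<lambda>x. x div 2) ` S"] inj assms(1) by (simp add: card_image)
qed

lemma quadratic_lower_bound:
  fixes e k s n :: nat
  assumes "e * (e - 1) + k * k \<le> s" "e + k = n" "k \<le> 2" "n \<ge> 4"
  shows "n ^ 2 + 10 \<le> s + 5 * n"
proof -
  obtain q where q: "n = q + 4"
    using assms(4) le_Suc_ex by (metis add.commute)
  from assms(3) consider "k = 0" | "k = 1" | "k = 2"
    by linarith
  then show ?thesis
  proof cases
    case 1
    with assms(2) q have "e = q + 4" by simp
    with assms(1) 1 q show ?thesis by (simp add: power2_eq_square algebra_simps)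
  next
    case 2
    with assms(2) q have "e = q + 3" by simp
    with assms(1) 2 q show ?thesis by (simp add: power2_eq_square algebra_simps)
  next
    case 3
    with assms(2) q have "e = q + 2" by simp
    with assms(1) 3 q show ?thesis by (simp add: power2_eq_square algebra_simps)
  qed
qed

lemma sum_ge_if_at_most_two_odd:
  fixes A :: "nat set"
  assumes "finite A" "card {x \<in> A. odd x} \<le> 2" "card A \<ge> 4"
  shows "card A ^ 2 + 10 \<le> \<Sum>A + 5 * card A"
proof -
  define Ev Od where "Ev = {x \<in> A. even x}" and "Od = {x \<in> A. odd x}"
  have split: "A = Ev \<union> Od" "Ev \<inter> Od = {}" "finite Ev" "finite Od"
    using assms(1) by (auto simp: Ev_def Od_def)
  have "\<forall>x\<in>Ev. x mod 2 = 0" "\<forall>x\<in>Od. x mod 2 = 1"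
    by (auto simp: Ev_def Od_def odd_iff_mod_2_eq_one)
  then have even_part: "card Ev * (card Ev - 1) \<le> \<Sum>Ev"
    and odd_part: "card Od * (card Od - 1) + card Od \<le> \<Sum>Od"
    using card_mult_pred_le_sum_same_parity[of Ev 0] card_mult_pred_le_sum_same_parity[of Od 1]
      split(3,4) by simp_all
  have card_A: "card A = card Ev + card Od" and sum_A: "\<Sum>A = \<Sum>Ev + \<Sum>Od"
    using split by (simp_all add: card_Un_disjoint sum.union_disjoint)
  have "card Od * card Od = card Od * (card Od - 1) + card Od"
    by (cases "card Od") simp_all
  with even_part odd_part sum_A
  have "card Ev * (card Ev - 1) + card Od * card Od \<le> \<Sum>A"
    by linarith
  moreover have "card Od \<le> 2"
    using assms(2) by (simp add: Od_def)
  ultimately show ?thesis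
    using quadratic_lower_bound card_A assms(3) by metis
qed

lemma min_irreg_walk_len_eqI:
  assumes "is_walk V E ws" "irregularising V E ws"
    and "\<And>ws'. is_walk V E ws' \<Longrightarrow> irregularising V E ws' \<Longrightarrow> walk_length ws \<le> walk_length ws'"
  shows "min_irreg_walk_len V E = walk_length ws"
  unfolding min_irreg_walk_len_def
  by (rule Least_equality) (use assms in blast)+

lemma is_walk_K_iff:
  "is_walk (K_V n) K_E ws \<longleftrightarrow> ws \<noteq> [] \<and> set ws \<subseteq> {0..<n} \<and> successively (\<noteq>) ws"
  by (auto simp: is_walk_def K_V_def K_E_def successively_conv_nth)

lemma graph_deg_K: "v < n \<Longrightarrow> graph_deg (K_V n) K_E v = n - 1"
proof -
  assume "v < n"
  then have "{u \<in> K_V n. K_E v u} = {0..<n} - {v}" by (auto simp: K_V_def K_E_def)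
  with \<open>v < n\<close> show ?thesis by (simp add: graph_deg_def)
qed

lemma irregularising_K_iff:
  "irregularising (K_V n) K_E ws \<longleftrightarrow> inj_on (walk_deg ws) {0..<n}"
proof -
  have "plus_walk_deg (K_V n) K_E ws v = n - 1 + walk_deg ws v" if "v \<in> K_V n" for v
    using that graph_deg_K[of v n] by (simp add: plus_walk_deg_eq K_V_def)
  then have "irregularising (K_V n) K_E ws \<longleftrightarrow>
      (\<forall>u\<in>K_V n. \<forall>v\<in>K_V n. u \<noteq> v \<longrightarrow> walk_deg ws u \<noteq> walk_deg ws v)"
    unfolding irregularising_def K_E_def by auto
  then show ?thesis
    unfolding inj_on_def K_V_def by blast
qed

lemma walk_length_ge_if_irregularising_K:
  assumes "n \<ge> 4" "is_walk (K_V n) K_E ws" "irregularising (K_V n) K_E ws"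
  shows "n ^ 2 + 10 \<le> 2 * walk_length ws + 5 * n"
proof -
  have walk: "ws \<noteq> []" "set ws \<subseteq> {0..<n}" "successively (\<noteq>) ws"
    using assms(2) by (simp_all add: is_walk_K_iff)
  have inj: "inj_on (walk_deg ws) {0..<n}"
    using assms(3) by (simp add: irregularising_K_iff)
  define A where "A = walk_deg ws ` {0..<n}"
  have "{x \<in> A. odd x} \<subseteq> walk_deg ws ` {hd ws, last ws}"
  proof
    fix x
    assume "x \<in> {x \<in> A. odd x}"
    then obtain v where "x = walk_deg ws v" "odd (walk_deg ws v)"
      by (auto simp: A_def)
    with even_walk_deg[OF walk(3), of v] show "x \<in> walk_deg ws ` {hd ws, last ws}"
      by blast
  qed
  then have "card {x \<in> A. odd x} \<le> card (walk_deg ws ` {hd ws, last ws})"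
    by (intro card_mono) auto
  also have "\<dots> \<le> 2"
    using card_image_le[of "{hd ws, last ws}" "walk_deg ws"] by (simp add: card_insert_if)
  finally have "card {x \<in> A. odd x} \<le> 2" .
  moreover have "card A = n" "\<Sum>A = 2 * walk_length ws"
    using inj sum_walk_deg[of "{0..<n}" ws] walk by (simp_all add: A_def card_image sum.reindex)
  ultimately show ?thesis
    using sum_ge_if_at_most_two_odd[of A] assms(1) by (simp add: A_def)
qed

fun descending_runs :: "nat \<Rightarrow> nat \<Rightarrow> nat list" where
  "descending_runs n 0 = []"
| "descending_runs n (Suc k) = rev [n - 1 - k..<n] @ descending_runs n k"

text \<open>The walk \<open>1 2 (n-1 \<dots> 2) (n-1 \<dots> 3) \<dots> (n-1) 2\<close> visits each \<open>v \<ge> 3\<close> exactly \<open>v - 2\<close>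
  times, never at an end, giving it walk degree \<open>2(v - 2)\<close>.\<close>

definition K_walk :: "nat \<Rightarrow> nat list" where
  "K_walk n = [1, 2] @ descending_runs n (n - 3) @ [2]"

definition K_walk_deg :: "nat \<Rightarrow> nat" where
  "K_walk_deg v = (if v = 0 then 0 else if v = 1 then 1 else if v = 2 then 3 else 2 * (v - 2))"

lemma set_descending_runs: "set (descending_runs n k) \<subseteq> {n - k..<n}"
  by (induction k) (auto dest!: subsetD)

lemma descending_runs_hd_last:
  assumes "1 \<le> k" "k < n"
  shows "descending_runs n k \<noteq> []
    \<and> hd (descending_runs n k) = n - 1 \<and> last (descending_runs n k) = n - 1"
  using assms
proof (induction k)
  case (Suc k)
  then show ?case
    by (cases "k = 0") (auto simp: hd_rev last_rev)
qed simp

lemma successively_descending_runs: "k < n \<Longrightarrow> successively (\<noteq>) (descending_runs n k)"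
proof (induction k)
  case (Suc k)
  have run: "successively (\<noteq>) (rev [n - 1 - k..<n])" "last (rev [n - 1 - k..<n]) = n - 1 - k"
    using Suc.prems
    by (auto simp: last_rev intro: successively_if_sorted_wrt sorted_wrt_mono_rel[OF _ sorted_wrt_upt])
  show ?case
  proof (cases "k = 0")
    case True
    with run show ?thesis by simp
  next
    case False
    with Suc descending_runs_hd_last[of k n] run show ?thesis
      by (auto simp: successively_append_iff)
  qed
qed simp

lemma count_list_upt: "count_list [a..<b] v = of_bool (a \<le> v \<and> v < b)"
  by (induction b) auto

lemma count_list_descending_runs:
  "k < n \<Longrightarrow> v < n \<Longrightarrow> count_list (descending_runs n k) v = k - (n - 1 - v)"
proof (induction k)
  case (Suc k)
  with count_list_upt[of "n - 1 - k" n v] show ?case by auto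
qed simp

lemma is_walk_K_walk:
  assumes "n \<ge> 4"
  shows "is_walk (K_V n) K_E (K_walk n)"
proof -
  have "descending_runs n (n - 3) \<noteq> [] \<and> hd (descending_runs n (n - 3)) = n - 1
      \<and> last (descending_runs n (n - 3)) = n - 1"
    using descending_runs_hd_last[of "n - 3" n] assms by simp
  moreover have "set (descending_runs n (n - 3)) \<subseteq> {0..<n}"
    using set_descending_runs[of n "n - 3"] by auto
  ultimately show ?thesis
    using successively_descending_runs[of "n - 3" n] assms
    by (simp add: is_walk_K_iff K_walk_def successively_append_iff successively_Cons)
qed

lemma walk_deg_K_walk:
  assumes "n \<ge> 4" "v < n"
  shows "walk_deg (K_walk n) v = K_walk_deg v"
proof -
  have "successively (\<noteq>) (K_walk n)" "K_walk n \<noteq> []"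
    using is_walk_K_walk[OF assms(1)] by (simp_all add: is_walk_K_iff)
  moreover have "hd (K_walk n) = 1" "last (K_walk n) = 2"
    by (simp_all add: K_walk_def)
  moreover have "count_list (K_walk n) v = of_bool (v = 1) + 2 * of_bool (v = 2) + (v - 2)"
    using count_list_descending_runs[of "n - 3" n v] assms by (auto simp: K_walk_def)
  ultimately show ?thesis
    using walk_deg_add_ends[of "K_walk n" v] assms by (auto simp: K_walk_deg_def)
qed

lemma inj_on_K_walk_deg: "inj_on K_walk_deg {0..<n}"
  by (auto simp: inj_on_def K_walk_deg_def split: if_splits; presburger)

lemma sum_K_walk_deg: "n \<ge> 4 \<Longrightarrow> (\<Sum>v = 0..<n. K_walk_deg v) + 5 * n = n ^ 2 + 10"
proof (induction n rule: dec_induct[where i = 4, simplified])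
  case base
  show ?case by (simp add: K_walk_deg_def numeral_eq_Suc)
next
  case (step m)
  then show ?case by (simp add: K_walk_deg_def power2_eq_square algebra_simps)
qed

lemma min_irreg_walk_len_K:
  assumes "n \<ge> 4"
  shows "2 * min_irreg_walk_len (K_V n) K_E + 5 * n = n ^ 2 + 10"
proof -
  have walk: "is_walk (K_V n) K_E (K_walk n)"
    using is_walk_K_walk[OF assms] .
  have degs: "\<And>v. v \<in> {0..<n} \<Longrightarrow> walk_deg (K_walk n) v = K_walk_deg v"
    using walk_deg_K_walk[OF assms] by simp
  then have "inj_on (walk_deg (K_walk n)) {0..<n}"
    using inj_on_K_walk_deg inj_on_cong by blast
  then have irreg: "irregularising (K_V n) K_E (K_walk n)"
    by (simp add: irregularising_K_iff)
  have "(\<Sum>v = 0..<n. walk_deg (K_walk n) v) = (\<Sum>v = 0..<n. K_walk_deg v)"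
    using degs by (rule sum.cong[OF refl])
  then have "2 * walk_length (K_walk n) = (\<Sum>v = 0..<n. K_walk_deg v)"
    using sum_walk_deg[of "{0..<n}" "K_walk n"] walk by (simp add: is_walk_K_iff)
  with sum_K_walk_deg[OF assms]
  have len: "2 * walk_length (K_walk n) + 5 * n = n ^ 2 + 10" by simp
  have "min_irreg_walk_len (K_V n) K_E = walk_length (K_walk n)"
    using walk irreg walk_length_ge_if_irregularising_K[OF assms] len
    by (intro min_irreg_walk_len_eqI) fastforce+
  with len show ?thesis by simp
qed

lemma walk_length_ge_if_irregularising_K3:
  assumes "is_walk (K_V 3) K_E ws" "irregularising (K_V 3) K_E ws"
  shows "3 \<le> walk_length ws"
proof (rule ccontr)
  have walk: "ws \<noteq> []" "set ws \<subseteq> {0..<3}" "successively (\<noteq>) ws"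
    using assms(1) by (simp_all add: is_walk_K_iff)
  have distinct_degs: "u = v" if "u < 3" "v < 3" "walk_deg ws u = walk_deg ws v" for u v
    using assms(2) that by (auto simp: irregularising_K_iff inj_on_def)
  assume "\<not> 3 \<le> walk_length ws"
  then have "length ws \<le> 3"
    by (simp add: walk_length_def)
  then consider a where "ws = [a]" | a b where "ws = [a, b]" | a b c where "ws = [a, b, c]"
    using walk(1) by (cases ws; cases "tl ws"; cases "tl (tl ws)"; cases "tl (tl (tl ws))") auto
  then show False
  proof cases
    case 1
    then show ?thesis using distinct_degs[of 0 1] by simp
  next
    case 2
    then show ?thesis using distinct_degs[of a b] walk by auto
  next
    case 3
    then show ?thesis using distinct_degs[of a b] distinct_degs[of a c] walk by (cases "a = c") auto
  qed
qed

lemma min_irreg_walk_len_K3: "min_irreg_walk_len (K_V 3) K_E = 3"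
proof -
  let ?ws = "[0, 1, 0, 2] :: nat list"
  have walk: "is_walk (K_V 3) K_E ?ws"
    by (simp add: is_walk_K_iff)
  have "{0..<3 :: nat} = {0, 1, 2}" by auto
  then have irreg: "irregularising (K_V 3) K_E ?ws"
    by (simp add: irregularising_K_iff inj_on_def)
  have len: "walk_length ?ws = 3"
    by (simp add: walk_length_def)
  have "min_irreg_walk_len (K_V 3) K_E = walk_length ?ws"
    by (intro min_irreg_walk_len_eqI[OF walk irreg]) (metis len walk_length_ge_if_irregularising_K3)
  with len show ?thesis by simp
qed

theorem theorem5p1:
  shows "min_irreg_walk_len (K_V 3) K_E = 3 \<and>
    (\<forall>n::nat. n \<ge> 4 \<longrightarrow> 2 * min_irreg_walk_len (K_V n) K_E = n^2 + 10 - 5*n)"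
  using min_irreg_walk_len_K3 min_irreg_walk_len_K by (metis add_diff_cancel_right')

end
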